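(* Let $\mathcal G$ be the complete graph on $N\ge2$ nodes with all edge weights equal to $b>0$, and fix $\alpha,m,\tau,k>0$. Then the function $$J(\gamma)=\frac{\alpha}{2m}(N-1)\frac{1}{1+\dfrac{\gamma\tau Nb+k}{\gamma Nb(\gamma\tau Nb+k)+k^2mNb}},\qquad\gamma\ge0,$$ (the squared $\mathcal H_2$ norm of $H_{\mathrm{DAPI}}$ for this graph) is minimized over $[0,\infty)$ at $$\gamma^*=\frac{k}{Nb\tau}\big(\sqrt{Nbm\tau}-1\big)\quad\text{if } Nbm\tau>1,$$ and at $\gamma^*=0$ otherwise.
   Context: $H_{\mathrm{DAPI}}$ is the system $\dot\theta=\omega$, $\dot\omega=-\tfrac m\tau L_B\theta-\tfrac1\tau\omega+\tfrac1\tau\Omega+\tfrac1\tau w$, $\dot\Omega=-\tfrac1k\omega-\tfrac1k\gamma L_B\Omega$, output $y=(\alpha L_B)^{1/2}\theta$, where $L_B$ is the Laplacian of the complete graph with uniform edge weight $b$ (whose nonzero eigenvalues all equal $Nb$). $\|H\|_2^2:=\int_0^\infty\operatorname{tr}(Ce^{At}BB^Te^{A^Tt}C^T)\,dt$. *)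

theory Defs
  imports Complex_Main
begin

definition J_DAPI :: "nat \<Rightarrow> real \<Rightarrow> real \<Rightarrow> real \<Rightarrow> real \<Rightarrow> real \<Rightarrow> real \<Rightarrow> real" where
  "J_DAPI N b \<alpha> m \<tau> k \<gamma> =
     \<alpha> / (2 * m) * (real N - 1) *
     (1 / (1 + (\<gamma> * \<tau> * real N * b + k) /
               (\<gamma> * real N * b * (\<gamma> * \<tau> * real N * b + k) + k^2 * m * real N * b)))"

definition gamma_opt :: "nat \<Rightarrow> real \<Rightarrow> real \<Rightarrow> real \<Rightarrow> real \<Rightarrow> real" where
  "gamma_opt N b m \<tau> k =
     (if real N * b * m * \<tau> > 1
      then k / (real N * b * \<tau>) * (sqrt (real N * b * m * \<tau>) - 1)
      else 0)"

end

theory Submission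
  imports Defs
begin

text \<open>With \<open>u = \<gamma>\<tau>Nb + k\<close> and \<open>a = k\<surd>(Nbm\<tau>)\<close> one has
  \<open>J = \<alpha>(N-1)/(2m) / (1 + \<tau>/(u - k + a\<^sup>2/u))\<close>, so \<open>J\<close> is minimal where
  \<open>u + a\<^sup>2/u\<close> is. Over the admissible range \<open>u \<ge> k\<close> that happens at \<open>u = a\<close> if
  \<open>a \<ge> k\<close>, i.e. \<open>Nbm\<tau> \<ge> 1\<close>, and at the boundary \<open>u = k\<close> otherwise; these are
  the two branches of \<open>\<gamma>\<^sup>*\<close>.\<close>

lemma add_square_divide_min_on_ray:
  fixes k a u :: real
  assumes "0 < k" "0 < a" "k \<le> u"
  shows "max k a + a\<^sup>2 / max k a \<le> u + a\<^sup>2 / u"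
proof (cases "k \<le> a")
  case True
  have "u + a\<^sup>2 / u - 2 * a = (u - a)\<^sup>2 / u"
    using assms by (simp add: field_simps power2_eq_square)
  moreover have "(u - a)\<^sup>2 / u \<ge> 0"
    using assms by simp
  moreover have "max k a + a\<^sup>2 / max k a = 2 * a"
    using True assms by (simp add: power2_eq_square)
  ultimately show ?thesis
    by linarith
next
  case False
  have diff: "u + a\<^sup>2 / u - (k + a\<^sup>2 / k) = (u - k) * (u * k - a\<^sup>2) / (u * k)"
    using assms by (simp add: field_simps power2_eq_square)
  have "a\<^sup>2 \<le> u * k"
    using False assms by (simp add: power2_eq_square mult_mono)
  then have "(u - k) * (u * k - a\<^sup>2) / (u * k) \<ge> 0"
    using assms by (simp add: divide_nonneg_pos)
  with diff False show ?thesis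
    by simp
qed

lemma J_DAPI_eq_shifted:
  fixes N :: nat and b \<alpha> m \<tau> k \<gamma> :: real
  assumes "b > 0" "m > 0" "\<tau> > 0" "k > 0" "\<gamma> \<ge> 0"
  defines "u \<equiv> \<gamma> * \<tau> * real N * b + k" and "a \<equiv> k * sqrt (real N * b * m * \<tau>)"
  shows "J_DAPI N b \<alpha> m \<tau> k \<gamma> = \<alpha> / (2 * m) * (real N - 1) / (1 + \<tau> / (u - k + a\<^sup>2 / u))"
proof -
  have "u > 0"
    using assms by (simp add: u_def add_nonneg_pos)
  define D where "D = \<gamma> * real N * b * u + k\<^sup>2 * m * real N * b"
  have a2: "a\<^sup>2 = k\<^sup>2 * (real N * b * m * \<tau>)"
    using assms by (simp add: a_def power_mult_distrib)
  have "u * (u - k + a\<^sup>2 / u) = u * (u - k) + a\<^sup>2"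
    using \<open>u > 0\<close> by (simp add: field_simps)
  also have "\<dots> = \<tau> * D"
    unfolding a2 D_def by (simp add: u_def algebra_simps)
  finally have cross: "\<tau> * D = u * (u - k + a\<^sup>2 / u)"
    by (simp add: D_def)
  have "\<tau> / (u - k + a\<^sup>2 / u) = u / D"
  proof (cases "u - k + a\<^sup>2 / u = 0")
    case True
    with cross \<open>\<tau> > 0\<close> show ?thesis
      by simp
  next
    case False
    with cross \<open>\<tau> > 0\<close> \<open>u > 0\<close> have "D \<noteq> 0"
      by auto
    with False cross show ?thesis
      by (simp add: frac_eq_eq mult.commute)
  qed
  then show ?thesis
    by (simp add: J_DAPI_def D_def u_def)
qed

lemma gamma_opt_nonneg:
  assumes "b > 0" "\<tau> > 0" "k > 0"
  shows "gamma_opt N b m \<tau> k \<ge> 0"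
  using assms by (simp add: gamma_opt_def)

lemma gamma_opt_shifted:
  assumes "b > 0" "m > 0" "\<tau> > 0" "k > 0"
  shows "gamma_opt N b m \<tau> k * \<tau> * real N * b + k = max k (k * sqrt (real N * b * m * \<tau>))"
proof (cases "real N * b * m * \<tau> > 1")
  case True
  then have "real N > 0"
    using assms by (auto intro: ccontr)
  with True assms show ?thesis
    by (simp add: gamma_opt_def field_simps)
next
  case False
  then have "sqrt (real N * b * m * \<tau>) \<le> 1"
    by simp
  with False assms show ?thesis
    by (simp add: gamma_opt_def mult_left_le)
qed

theorem corollary2:
  fixes N :: nat and b \<alpha> m \<tau> k :: real
  assumes "N \<ge> 2" and "b > 0" and "\<alpha> > 0" and "m > 0" and "\<tau> > 0" and "k > 0"
  shows "gamma_opt N b m \<tau> k \<ge> 0 \<and>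
         (\<forall>\<gamma>::real. \<gamma> \<ge> 0 \<longrightarrow>
            J_DAPI N b \<alpha> m \<tau> k (gamma_opt N b m \<tau> k) \<le> J_DAPI N b \<alpha> m \<tau> k \<gamma>)"
proof (intro conjI allI impI)
  let ?\<gamma>\<^sub>0 = "gamma_opt N b m \<tau> k"
  show "?\<gamma>\<^sub>0 \<ge> 0"
    using assms by (simp add: gamma_opt_nonneg)
  fix \<gamma> :: real
  assume "\<gamma> \<ge> 0"
  define a where "a = k * sqrt (real N * b * m * \<tau>)"
  define E where "E u = u - k + a\<^sup>2 / u" for u
  define u where "u = \<gamma> * \<tau> * real N * b + k"
  have "a > 0"
    using assms by (simp add: a_def)
  have "k \<le> u"
    using assms \<open>\<gamma> \<ge> 0\<close> by (simp add: u_def)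
  have E_min: "E (max k a) \<le> E u"
    using add_square_divide_min_on_ray[OF \<open>k > 0\<close> \<open>a > 0\<close> \<open>k \<le> u\<close>] by (simp add: E_def)
  have "E (max k a) > 0"
    using \<open>a > 0\<close> by (simp add: E_def add_nonneg_pos)
  then have "1 + \<tau> / E u \<le> 1 + \<tau> / E (max k a)"
    using E_min \<open>\<tau> > 0\<close> by (simp add: frac_le)
  moreover have "\<alpha> / (2 * m) * (real N - 1) \<ge> 0"
    using assms by simp
  moreover have "0 < (1 + \<tau> / E (max k a)) * (1 + \<tau> / E u)"
    using E_min \<open>E (max k a) > 0\<close> \<open>\<tau> > 0\<close> by (simp add: add_pos_nonneg)
  ultimately have "\<alpha> / (2 * m) * (real N - 1) / (1 + \<tau> / E (max k a))
      \<le> \<alpha> / (2 * m) * (real N - 1) / (1 + \<tau> / E u)"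
    by (rule divide_left_mono)
  then show "J_DAPI N b \<alpha> m \<tau> k ?\<gamma>\<^sub>0 \<le> J_DAPI N b \<alpha> m \<tau> k \<gamma>"
    using assms \<open>\<gamma> \<ge> 0\<close> gamma_opt_nonneg[of b \<tau> k N m] gamma_opt_shifted[of b m \<tau> k N]
    by (simp add: J_DAPI_eq_shifted E_def u_def a_def)
qed

end
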